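(* If $|\Sigma|\ge3$, then the set $\mathtt{REV}$ of injective cellular automata is not closed in $(\mathtt{CA},\delta)$; that is, there is a sequence of injective CA converging in $\delta$ to a non-injective CA.
   Context: $\Sigma$ is a finite alphabet, $N(r)=[-r,r]$. A cellular automaton (CA) is a map $c:\Sigma^\mathbb{Z}\to\Sigma^\mathbb{Z}$ of the form $c(x)_i=F(x_{[i-r,i+r]})$ for a local function $F:\Sigma^{N(r)}\to\Sigma$. $\mathtt{CA}$ is the set of all CA, $\mathtt{REV}$ the injective ones. For $c,d\in\mathtt{CA}$ with common radius $r$, $D^c_d$ is the set of $w\in\Sigma^{N(r)}$ on which the local rules of $c$ and $d$ give different outputs, and $\delta(c,d)=|D^c_d|/|\Sigma|^{2r+1}$ (independent of $r$). *)

theory Defs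
  imports "HOL-Analysis.Analysis" "HOL-Library.FuncSet"
begin

type_synonym 'a config = "int \<Rightarrow> 'a"

definition patterns :: "nat \<Rightarrow> (int \<Rightarrow> 'a) set" where
  "patterns r = PiE {- int r .. int r} (\<lambda>_. UNIV)"

definition window :: "nat \<Rightarrow> 'a config \<Rightarrow> int \<Rightarrow> (int \<Rightarrow> 'a)" where
  "window r x i = restrict (\<lambda>j. x (i + j)) {- int r .. int r}"

definition has_radius :: "nat \<Rightarrow> ('a config \<Rightarrow> 'a config) \<Rightarrow> bool" where
  "has_radius r c \<longleftrightarrow> (\<exists>F. \<forall>x i. c x i = F (window r x i))"

definition CA :: "('a config \<Rightarrow> 'a config) set" where
  "CA = {c. \<exists>r. has_radius r c}"

definition REV :: "('a config \<Rightarrow> 'a config) set" where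
  "REV = {c \<in> CA. inj c}"

text \<open>For a pattern w of radius r (viewed as a configuration undefined outside N(r)),
  c w 0 is the value of the local rule of c (of radius r) on w.\<close>
definition delta :: "('a::finite config \<Rightarrow> 'a config) \<Rightarrow> ('a config \<Rightarrow> 'a config) \<Rightarrow> real" where
  "delta c d = (let r = (LEAST r. has_radius r c \<and> has_radius r d) in
     real (card {w \<in> patterns r. c w 0 \<noteq> d w 0}) / real (CARD('a)) ^ (2 * r + 1))"

end

theory Submission
  imports Defs
begin

(*
  Fix two "bit" symbols zero, one and read a configuration as a word over them,
  interrupted by "separators" (all other symbols).  The limit automaton xor_ca
  replaces a bit x_i by x_i XOR x_(i+1) whenever x_(i+1) is a bit too, and leaves all
  other cells alone.  It is not injective: the constant configurations of zero and
  of one both map to the constant zero configuration.  The approximant guarded_xor_ca m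
  applies the same rule only at cells that see a separator among their next m right
  neighbours.  A bit block followed by a separator can then be decoded from right to
  left, so the approximant is injective (lemma guarded_xor_ca_inj); it has least
  radius m in common with xor_ca (given a third symbol); and it differs from xor_ca
  only on windows carrying m bits at positions 1..m, a fraction at most (2/|Sigma|)^m
  of all windows (lemma delta_guarded_xor_ca_le).  Letting m grow gives the theorem.
*)

locale bit_pair =
  fixes zero one :: 'a
  assumes zero_neq_one: "zero \<noteq> one"
begin

definition is_bit :: "'a \<Rightarrow> bool" where
  "is_bit s \<longleftrightarrow> s = zero \<or> s = one"

definition bxor :: "'a \<Rightarrow> 'a \<Rightarrow> 'a" where
  "bxor u v = (if u = zero then v else if v = zero then one else zero)"

definition xor_rule :: "'a \<Rightarrow> 'a \<Rightarrow> 'a" where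
  "xor_rule u v = (if is_bit u \<and> is_bit v then bxor u v else u)"

definition xor_ca :: "'a config \<Rightarrow> 'a config" where
  "xor_ca x i = xor_rule (x i) (x (i + 1))"

definition near_separator :: "nat \<Rightarrow> 'a config \<Rightarrow> int \<Rightarrow> bool" where
  "near_separator m x i \<longleftrightarrow> (\<exists>j\<in>{1..int m}. \<not> is_bit (x (i + j)))"

definition guarded_xor_ca :: "nat \<Rightarrow> 'a config \<Rightarrow> 'a config" where
  "guarded_xor_ca m x i = (if near_separator m x i then xor_ca x i else x i)"

lemma xor_ca_has_radius: "m \<ge> 1 \<Longrightarrow> has_radius m xor_ca"
  unfolding has_radius_def
  by (rule exI[of _ "\<lambda>w. xor_rule (w 0) (w 1)"]) (simp add: xor_ca_def window_def)

lemma guarded_xor_ca_has_radius: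
  assumes "m \<ge> 1" shows "has_radius m (guarded_xor_ca m)"
  unfolding has_radius_def
proof (intro exI allI)
  fix x :: "'a config" and i
  have "near_separator m x i \<longleftrightarrow> near_separator m (window m x i) 0"
    by (auto simp: near_separator_def window_def)
  then show "guarded_xor_ca m x i =
      (\<lambda>w. if near_separator m w 0 then xor_rule (w 0) (w 1) else w 0) (window m x i)"
    using assms by (simp add: guarded_xor_ca_def xor_ca_def window_def)
qed

lemma is_bit_xor_rule: "is_bit (xor_rule u v) \<longleftrightarrow> is_bit u"
  using zero_neq_one by (auto simp: xor_rule_def bxor_def is_bit_def)

lemma xor_rule_cancel:
  assumes "is_bit u \<longleftrightarrow> is_bit u'" and "xor_rule u v = xor_rule u' v"
  shows "u = u'"
  using assms zero_neq_one by (auto simp: xor_rule_def bxor_def is_bit_def split: if_splits)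

lemma xor_ca_not_inj: "\<not> inj xor_ca"
proof
  assume "inj xor_ca"
  moreover have "xor_ca (\<lambda>_. zero) = xor_ca (\<lambda>_. one)"
    using zero_neq_one by (auto simp: xor_ca_def xor_rule_def bxor_def is_bit_def)
  ultimately have "(\<lambda>_::int. zero) = (\<lambda>_. one)" by (simp add: inj_eq)
  then show False using zero_neq_one by (metis fun_cong)
qed

lemma near_separator_cong:
  "(\<And>i. is_bit (x i) \<longleftrightarrow> is_bit (y i)) \<Longrightarrow> near_separator m x i \<longleftrightarrow> near_separator m y i"
  by (simp add: near_separator_def)

lemma guarded_xor_ca_separator: "\<not> is_bit (x i) \<Longrightarrow> guarded_xor_ca m x i = x i"
  by (simp add: guarded_xor_ca_def xor_ca_def xor_rule_def)

lemma guarded_xor_ca_decode: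
  assumes eq: "guarded_xor_ca m x = guarded_xor_ca m y"
    and bits: "\<And>i. is_bit (x i) \<longleftrightarrow> is_bit (y i)"
    and sep: "\<not> is_bit (x (i + int d))" and "d \<le> m"
  shows "x i = y i"
  using sep \<open>d \<le> m\<close>
proof (induction d arbitrary: i)
  case 0
  then have "\<not> is_bit (x i)" "\<not> is_bit (y i)" using bits by simp_all
  then show ?case using fun_cong[OF eq, of i] by (simp add: guarded_xor_ca_separator)
next
  case (Suc d)
  have next_eq: "x (i + 1) = y (i + 1)"
    using Suc.IH[of "i + 1"] Suc.prems by (simp add: add.assoc)
  have near_x: "near_separator m x i"
    using Suc.prems unfolding near_separator_def by (auto intro!: bexI[of _ "int (Suc d)"])
  then have "near_separator m y i" using bits near_separator_cong by blast
  with near_x have "xor_rule (x i) (x (i + 1)) = xor_rule (y i) (x (i + 1))"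
    using fun_cong[OF eq, of i] next_eq by (simp add: guarded_xor_ca_def xor_ca_def)
  then show ?case using bits xor_rule_cancel by blast
qed

lemma guarded_xor_ca_inj: "inj (guarded_xor_ca m)"
proof (rule injI, rule ext)
  fix x y :: "'a config" and i
  assume eq: "guarded_xor_ca m x = guarded_xor_ca m y"
  have bits: "is_bit (x i) \<longleftrightarrow> is_bit (y i)" for i
    using arg_cong[OF fun_cong[OF eq, of i], of is_bit]
    by (simp add: guarded_xor_ca_def xor_ca_def is_bit_xor_rule split: if_splits)
  show "x i = y i"
  proof (cases "near_separator m x i")
    case True
    then obtain j where "j \<in> {1..int m}" "\<not> is_bit (x (i + j))"
      unfolding near_separator_def by blast
    then show ?thesis
      using guarded_xor_ca_decode[OF eq bits, of i "nat j"] by (simp add: nat_le_iff)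
  next
    case False
    then have "\<not> near_separator m y i" using bits near_separator_cong by blast
    then show ?thesis
      using False fun_cong[OF eq, of i] by (simp add: guarded_xor_ca_def)
  qed
qed

text \<open>With a third symbol, m is the least radius shared by the two automata:
  the approximant must see position m to decide whether to act at 0.\<close>
lemma least_common_radius:
  assumes sep: "\<not> is_bit s" and m: "m \<ge> 2"
  shows "(LEAST r. has_radius r (guarded_xor_ca m) \<and> has_radius r xor_ca) = m"
proof (rule Least_equality)
  show "has_radius m (guarded_xor_ca m) \<and> has_radius m xor_ca"
    using m guarded_xor_ca_has_radius xor_ca_has_radius by simp
next
  fix r assume "has_radius r (guarded_xor_ca m) \<and> has_radius r xor_ca"
  then obtain F where F: "\<And>x i. guarded_xor_ca m x i = F (window r x i)"
    unfolding has_radius_def by blast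
  show "m \<le> r"
  proof (rule ccontr)
    assume "\<not> m \<le> r"
    define y :: "'a config" where "y = (\<lambda>j. if j = 0 \<or> j = 1 then one else zero)"
    define x where "x = y(int m := s)"
    have "window r x 0 = window r y 0"
      using \<open>\<not> m \<le> r\<close> by (auto simp: window_def x_def)
    moreover have "guarded_xor_ca m x 0 = zero"
      using m sep zero_neq_one
      by (auto simp: guarded_xor_ca_def near_separator_def xor_ca_def xor_rule_def bxor_def
          is_bit_def x_def y_def intro!: bexI[of _ "int m"])
    moreover have "guarded_xor_ca m y 0 = one"
      by (auto simp: guarded_xor_ca_def near_separator_def is_bit_def y_def)
    ultimately show False using F[of x 0] F[of y 0] zero_neq_one by simp
  qed
qed

lemma disagreement_windows:
  "{w \<in> patterns m. guarded_xor_ca m w 0 \<noteq> xor_ca w 0}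
     \<subseteq> {w \<in> patterns m. \<forall>j\<in>{1..int m}. w j \<in> {zero, one}}"
  by (auto simp: guarded_xor_ca_def near_separator_def is_bit_def)

end

lemma card_patterns_constrained:
  "card {w \<in> patterns m. \<forall>j\<in>{1..int m}. w j \<in> B}
     = card (B :: 'a::finite set) ^ m * CARD('a) ^ (m + 1)"
proof -
  define C where "C j = (if j \<in> {1..int m} then B else (UNIV :: 'a set))" for j
  have "{w \<in> patterns m. \<forall>j\<in>{1..int m}. w j \<in> B} = PiE {- int m .. int m} C"
    by (auto simp: patterns_def C_def PiE_def Pi_def)
  moreover have "{- int m .. int m} = {- int m .. 0} \<union> {1 .. int m}" by auto
  moreover have "(\<Prod>j\<in>{- int m .. 0}. card (C j)) = CARD('a) ^ (m + 1)"
    by (simp add: C_def nat_add_distrib)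
  moreover have "(\<Prod>j\<in>{1 .. int m}. card (C j)) = card B ^ m"
    by (simp add: C_def)
  ultimately show ?thesis
    by (simp add: card_PiE prod.union_disjoint ivl_disj_int)
qed

lemma delta_guarded_xor_ca_le:
  fixes zero one s :: "'a::finite"
  assumes bp: "bit_pair zero one" and sep: "\<not> bit_pair.is_bit zero one s" and m: "m \<ge> 2"
  shows "delta (bit_pair.guarded_xor_ca zero one m) (bit_pair.xor_ca zero one)
           \<le> (2 / real CARD('a)) ^ m"
proof -
  interpret bit_pair zero one by (rule bp)
  define q where "q = real CARD('a)"
  have q: "q > 0" by (simp add: q_def)
  have "card {w \<in> patterns m. guarded_xor_ca m w 0 \<noteq> xor_ca w 0}
      \<le> card {w \<in> patterns m. \<forall>j\<in>{1..int m}. w j \<in> {zero, one}}"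
    by (rule card_mono[OF _ disagreement_windows]) (simp add: patterns_def finite_PiE)
  also have "\<dots> = 2 ^ m * CARD('a) ^ (m + 1)"
    using card_patterns_constrained[of m "{zero, one}"] zero_neq_one by (simp add: numeral_2_eq_2)
  finally have disagree: "card {w \<in> patterns m. guarded_xor_ca m w 0 \<noteq> xor_ca w 0}
      \<le> 2 ^ m * CARD('a) ^ (m + 1)" .
  have "real (card {w \<in> patterns m. guarded_xor_ca m w 0 \<noteq> xor_ca w 0})
      \<le> 2 ^ m * q ^ (m + 1)"
    using of_nat_mono[OF disagree, where 'a=real] by (simp add: q_def)
  then have "delta (guarded_xor_ca m) xor_ca \<le> 2 ^ m * q ^ (m + 1) / q ^ (2 * m + 1)"
    unfolding delta_def least_common_radius[OF sep m] Let_def q_def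
    by (rule divide_right_mono) simp
  also have "\<dots> = (2 / q) ^ m"
    using q by (simp add: power_add power_divide mult_2 flip: add.assoc)
  finally show ?thesis by (simp add: q_def)
qed

lemma delta_nonneg: "0 \<le> delta c d"
  by (simp add: delta_def Let_def)

lemma three_distinct:
  assumes "CARD('a::finite) \<ge> 3"
  obtains a b c :: "'a::finite" where "a \<noteq> b" "c \<noteq> a" "c \<noteq> b"
proof -
  obtain A :: "'a set" where "card A = 3"
    using assms obtain_subset_with_card_n by blast
  then show ?thesis using that by (auto simp: card_3_iff)
qed

theorem mainTheorem9:
  assumes "CARD('a::finite) \<ge> 3"
  shows "\<exists>(cs :: nat \<Rightarrow> 'a config \<Rightarrow> 'a config) c.
           (\<forall>n. cs n \<in> REV) \<and> c \<in> CA \<and> c \<notin> REV \<and>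
           (\<lambda>n. delta (cs n) c) \<longlonglongrightarrow> 0"
proof -
  obtain zero one s :: 'a where "zero \<noteq> one" "s \<noteq> zero" "s \<noteq> one"
    using three_distinct[OF assms] by blast
  then interpret bit_pair zero one
    by unfold_locales
  have sep: "\<not> is_bit s" using \<open>s \<noteq> zero\<close> \<open>s \<noteq> one\<close> by (simp add: is_bit_def)
  define cs where "cs n = guarded_xor_ca (n + 2)" for n
  have "cs n \<in> REV" for n
    using guarded_xor_ca_has_radius[of "n + 2"] guarded_xor_ca_inj
    by (auto simp: cs_def REV_def CA_def)
  moreover have "xor_ca \<in> CA" "xor_ca \<notin> REV"
    using xor_ca_has_radius[of 1] xor_ca_not_inj by (auto simp: CA_def REV_def)
  moreover have "(\<lambda>n. delta (cs n) xor_ca) \<longlonglongrightarrow> 0"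
  proof (rule Lim_null_comparison)
    have "\<bar>delta (cs n) xor_ca\<bar> \<le> (2 / real CARD('a)) ^ (n + 2)" for n
      using delta_guarded_xor_ca_le[OF bit_pair_axioms sep, of "n + 2"]
      by (simp add: cs_def abs_of_nonneg delta_nonneg)
    then show "\<forall>\<^sub>F n in sequentially. norm (delta (cs n) xor_ca) \<le> (2 / real CARD('a)) ^ (n + 2)"
      by simp
    show "(\<lambda>n. (2 / real CARD('a)) ^ (n + 2)) \<longlonglongrightarrow> 0"
      using assms by (intro LIMSEQ_power_zero[THEN LIMSEQ_ignore_initial_segment]) auto
  qed
  ultimately show ?thesis by blast
qed

end
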